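(* For $i=1,2$ let $\pi^{(i)}$, $\sigma^{(i)}$, $\pi'^{(i)}$ be formal Poisson deformations of $\pi_0$, $\sigma_0$, $\pi_0'$ respectively, and let $\Phi^{(i)}:(\mathcal{A}[[\lambda]],\pi^{(i)})\to(\mathcal{B}[[\lambda]],\sigma^{(i)})$ and $\Phi'^{(i)}:(\mathcal{A}'[[\lambda]],\pi'^{(i)})\to(\mathcal{B}[[\lambda]],\sigma^{(i)})$ be $\mathbb{K}[[\lambda]]$-linear Poisson morphisms with zeroth-order terms $\phi_0$ and $\phi_0'$ respectively, whose images Poisson commute with respect to $\sigma^{(i)}$. Suppose there are $\mathbb{K}[[\lambda]]$-linear Poisson isomorphisms $\psi:(\mathcal{A}[[\lambda]],\pi^{(1)})\to(\mathcal{A}[[\lambda]],\pi^{(2)})$ and $\Psi:(\mathcal{B}[[\lambda]],\sigma^{(1)})\to(\mathcal{B}[[\lambda]],\sigma^{(2)})$ with $\Phi^{(2)}\circ\psi=\Psi\circ\Phi^{(1)}$. Then there is a Poisson isomorphism $\psi':(\mathcal{A}'[[\lambda]],\pi'^{(1)})\to(\mathcal{A}'[[\lambda]],\pi'^{(2)})$ such that $\Phi'^{(2)}\circ\psi'=\Psi\circ\Phi'^{(1)}$.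
   Context: $\mathbb{K}$ is a field of characteristic zero. $\mathcal{A},\mathcal{B}$ are commutative $\mathbb{K}$-algebras with Poisson brackets $\pi_0$, $\sigma_0$, and $\phi_0:\mathcal{A}\to\mathcal{B}$ is a Poisson morphism. $\mathcal{A}'$ is the Poisson commutant $\{b\in\mathcal{B}:\sigma_0(b,\phi_0(a))=0\ \forall a\}$ with the induced bracket $\pi_0'$, and $\phi_0':\mathcal{A}'\to\mathcal{B}$ is the inclusion. A formal Poisson deformation of a Poisson bracket on an algebra $\mathcal{R}$ is a $\mathbb{K}[[\lambda]]$-bilinear Poisson bracket on $\mathcal{R}[[\lambda]]$ (with $\lambda$-linearly extended product) whose zeroth-order term is the given bracket. Poisson morphisms preserve both products and brackets. *)

theory Defs
  imports Main "HOL.Vector_Spaces"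
begin

text \<open>A commutative (not necessarily unital) K-algebra is a type of class comm_ring
  together with a scalar multiplication by the field 'k making it a K-module such that
  multiplication is K-bilinear.\<close>

definition kalg :: "('k::field_char_0 \<Rightarrow> 'a::comm_ring \<Rightarrow> 'a) \<Rightarrow> bool" where
  "kalg sc \<longleftrightarrow> module sc \<and> (\<forall>c x y. sc c (x * y) = sc c x * y)"

definition klinear_on ::
  "('k::field_char_0 \<Rightarrow> 'a::comm_ring \<Rightarrow> 'a) \<Rightarrow> ('k \<Rightarrow> 'b::comm_ring \<Rightarrow> 'b) \<Rightarrow> 'a set \<Rightarrow> ('a \<Rightarrow> 'b) \<Rightarrow> bool" where
  "klinear_on sc1 sc2 S f \<longleftrightarrow>
     (\<forall>x\<in>S. \<forall>y\<in>S. f (x + y) = f x + f y) \<and> (\<forall>c. \<forall>x\<in>S. f (sc1 c x) = sc2 c (f x))"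

definition kbilinear_on ::
  "('k::field_char_0 \<Rightarrow> 'a::comm_ring \<Rightarrow> 'a) \<Rightarrow> 'a set \<Rightarrow> ('a \<Rightarrow> 'a \<Rightarrow> 'a) \<Rightarrow> bool" where
  "kbilinear_on sc S p \<longleftrightarrow>
     (\<forall>x\<in>S. \<forall>y\<in>S. \<forall>z\<in>S. p (x + y) z = p x z + p y z \<and> p x (y + z) = p x y + p x z) \<and>
     (\<forall>c. \<forall>x\<in>S. \<forall>y\<in>S. p (sc c x) y = sc c (p x y) \<and> p x (sc c y) = sc c (p x y))"

definition poisson_bracket_on ::
  "'x set \<Rightarrow> ('x \<Rightarrow> 'x \<Rightarrow> 'x) \<Rightarrow> ('x \<Rightarrow> 'x \<Rightarrow> 'x) \<Rightarrow> ('x \<Rightarrow> 'x \<Rightarrow> 'x) \<Rightarrow> 'x \<Rightarrow> bool" where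
  "poisson_bracket_on S add mul br z \<longleftrightarrow>
     (\<forall>x\<in>S. \<forall>y\<in>S. br x y \<in> S) \<and>
     (\<forall>x\<in>S. \<forall>y\<in>S. \<forall>w\<in>S. br (add x y) w = add (br x w) (br y w)) \<and>
     (\<forall>x\<in>S. \<forall>y\<in>S. add (br x y) (br y x) = z) \<and>
     (\<forall>x\<in>S. \<forall>y\<in>S. \<forall>w\<in>S.
        add (add (br x (br y w)) (br y (br w x))) (br w (br x y)) = z) \<and>
     (\<forall>x\<in>S. \<forall>y\<in>S. \<forall>w\<in>S. br x (mul y w) = add (mul (br x y) w) (mul y (br x w)))"

definition poisson_algebra :: "('k::field_char_0 \<Rightarrow> 'a::comm_ring \<Rightarrow> 'a) \<Rightarrow> ('a \<Rightarrow> 'a \<Rightarrow> 'a) \<Rightarrow> bool" where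
  "poisson_algebra sc p \<longleftrightarrow> kalg sc \<and> kbilinear_on sc UNIV p \<and> poisson_bracket_on UNIV (+) (*) p 0"

definition poisson_morphism ::
  "('k::field_char_0 \<Rightarrow> 'a::comm_ring \<Rightarrow> 'a) \<Rightarrow> ('a \<Rightarrow> 'a \<Rightarrow> 'a) \<Rightarrow>
   ('k \<Rightarrow> 'b::comm_ring \<Rightarrow> 'b) \<Rightarrow> ('b \<Rightarrow> 'b \<Rightarrow> 'b) \<Rightarrow> ('a \<Rightarrow> 'b) \<Rightarrow> bool" where
  "poisson_morphism sc1 p sc2 q f \<longleftrightarrow> klinear_on sc1 sc2 UNIV f \<and>
     (\<forall>x y. f (x * y) = f x * f y) \<and> (\<forall>x y. f (p x y) = q (f x) (f y))"

definition poisson_commutant :: "('b \<Rightarrow> 'b \<Rightarrow> 'b::comm_ring) \<Rightarrow> ('a \<Rightarrow> 'b) \<Rightarrow> 'b set" where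
  "poisson_commutant s0 phi0 = {b. \<forall>a. s0 b (phi0 a) = 0}"

section \<open>Formal power series R[[lambda]] as coefficient sequences\<close>

definition fser :: "'a set \<Rightarrow> (nat \<Rightarrow> 'a) set" where
  "fser S = {f. \<forall>n. f n \<in> S}"

definition sadd :: "(nat \<Rightarrow> 'a::comm_ring) \<Rightarrow> (nat \<Rightarrow> 'a) \<Rightarrow> nat \<Rightarrow> 'a" where
  "sadd f g = (\<lambda>n. f n + g n)"

definition fsmul :: "(nat \<Rightarrow> 'a::comm_ring) \<Rightarrow> (nat \<Rightarrow> 'a) \<Rightarrow> nat \<Rightarrow> 'a" where
  "fsmul f g = (\<lambda>n. \<Sum>i\<le>n. f i * g (n - i))"

text \<open>The K[[lambda]]-bilinear bracket sum_k lambda^k p_k.\<close>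
definition dbr :: "(nat \<Rightarrow> 'a \<Rightarrow> 'a \<Rightarrow> 'a::comm_ring) \<Rightarrow> (nat \<Rightarrow> 'a) \<Rightarrow> (nat \<Rightarrow> 'a) \<Rightarrow> nat \<Rightarrow> 'a" where
  "dbr p f g = (\<lambda>n. \<Sum>k\<le>n. \<Sum>i\<le>n - k. p k (f i) (g (n - k - i)))"

text \<open>The K[[lambda]]-linear map sum_k lambda^k phi_k.\<close>
definition dmap :: "(nat \<Rightarrow> 'a \<Rightarrow> 'b::comm_ring) \<Rightarrow> (nat \<Rightarrow> 'a) \<Rightarrow> nat \<Rightarrow> 'b" where
  "dmap phi f = (\<lambda>n. \<Sum>k\<le>n. phi k (f (n - k)))"

text \<open>Formal Poisson deformation of the bracket p0 on the subalgebra S: a series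
  sum_k lambda^k p_k of K-bilinear maps S x S -> S with p_0 = p0 on S, whose
  K[[lambda]]-bilinear extension is a Poisson bracket on S[[lambda]].\<close>
definition formal_poisson_deformation ::
  "('k::field_char_0 \<Rightarrow> 'a::comm_ring \<Rightarrow> 'a) \<Rightarrow> 'a set \<Rightarrow> ('a \<Rightarrow> 'a \<Rightarrow> 'a) \<Rightarrow> (nat \<Rightarrow> 'a \<Rightarrow> 'a \<Rightarrow> 'a) \<Rightarrow> bool" where
  "formal_poisson_deformation sc S p0 p \<longleftrightarrow>
     (\<forall>k. kbilinear_on sc S (p k) \<and> (\<forall>x\<in>S. \<forall>y\<in>S. p k x y \<in> S)) \<and>
     (\<forall>x\<in>S. \<forall>y\<in>S. p 0 x y = p0 x y) \<and>
     poisson_bracket_on (fser S) sadd fsmul (dbr p) (\<lambda>_. 0)"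

definition series_poisson_morphism ::
  "('k::field_char_0 \<Rightarrow> 'a::comm_ring \<Rightarrow> 'a) \<Rightarrow> 'a set \<Rightarrow> (nat \<Rightarrow> 'a \<Rightarrow> 'a \<Rightarrow> 'a) \<Rightarrow>
   ('k \<Rightarrow> 'b::comm_ring \<Rightarrow> 'b) \<Rightarrow> 'b set \<Rightarrow> (nat \<Rightarrow> 'b \<Rightarrow> 'b \<Rightarrow> 'b) \<Rightarrow> (nat \<Rightarrow> 'a \<Rightarrow> 'b) \<Rightarrow> bool" where
  "series_poisson_morphism sc1 S1 p sc2 S2 q phi \<longleftrightarrow>
     (\<forall>k. klinear_on sc1 sc2 S1 (phi k) \<and> phi k ` S1 \<subseteq> S2) \<and>
     (\<forall>f\<in>fser S1. \<forall>g\<in>fser S1.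
        dmap phi (fsmul f g) = fsmul (dmap phi f) (dmap phi g) \<and>
        dmap phi (dbr p f g) = dbr q (dmap phi f) (dmap phi g))"

definition series_poisson_iso ::
  "('k::field_char_0 \<Rightarrow> 'a::comm_ring \<Rightarrow> 'a) \<Rightarrow> 'a set \<Rightarrow> (nat \<Rightarrow> 'a \<Rightarrow> 'a \<Rightarrow> 'a) \<Rightarrow>
   (nat \<Rightarrow> 'a \<Rightarrow> 'a \<Rightarrow> 'a) \<Rightarrow> (nat \<Rightarrow> 'a \<Rightarrow> 'a) \<Rightarrow> bool" where
  "series_poisson_iso sc S p q phi \<longleftrightarrow>
     series_poisson_morphism sc S p sc S q phi \<and> bij_betw (dmap phi) (fser S) (fser S)"

end

theory Submission
  imports Defs
begin

(* Because the zeroth term of Phi'_i is the inclusion of A', the map Phi'_i is injective, and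
   its image is exactly the sigma_i-commutant of the image of Phi_i: a series commuting with
   that image can be inverted order by order, since the lowest non-vanishing coefficient of a
   bracket is a sigma0-bracket, which forces every new coefficient to lie in A'.
   Psi carries the sigma1-commutant of im Phi1 onto the sigma2-commutant of
   Psi(im Phi1) = Phi2(im psi) = im Phi2, hence maps im Phi'1 onto im Phi'2, and
   psi' = Phi'2^-1 Psi Phi'1 is the required isomorphism; injectivity of Phi'2 makes it
   linear and Poisson. *)

lemma fser_UNIV [simp]: "fser UNIV = UNIV"
  by (simp add: fser_def)

lemma sum_mem:
  assumes "finite L" "\<forall>l\<in>L. x l \<in> T" "(0::'a::comm_monoid_add) \<in> T" "\<forall>a\<in>T. \<forall>b\<in>T. a + b \<in> T"
  shows "sum x L \<in> T"
  using assms by (induction L rule: finite_induct) auto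

lemma additive_on_sum:
  assumes "finite L" "\<forall>l\<in>L. x l \<in> T" "(0::'a::comm_monoid_add) \<in> T" "\<forall>a\<in>T. \<forall>b\<in>T. a + b \<in> T"
    and add: "\<forall>a\<in>T. \<forall>b\<in>T. f (a + b) = f a + (f b :: 'b::ab_group_add)"
  shows "f (sum x L) = (\<Sum>l\<in>L. f (x l))"
  using assms(1,2)
proof (induction L rule: finite_induct)
  case empty
  have "f (0 + 0) = f 0 + f 0" using add assms(3) by blast
  then show ?case by simp
next
  case (insert a F)
  have "sum x F \<in> T" using sum_mem[of F x T] insert assms(3,4) by blast
  then show ?case using insert add by simp
qed

lemma klinear_on_zero:
  assumes "klinear_on sc1 sc2 S f" "0 \<in> S"
  shows "f 0 = 0"
proof -
  have "f (0 + 0) = f 0 + f 0" using assms unfolding klinear_on_def by blast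
  then show ?thesis by simp
qed

definition ksubalgebra :: "('k::field_char_0 \<Rightarrow> 'a::comm_ring \<Rightarrow> 'a) \<Rightarrow> 'a set \<Rightarrow> bool" where
  "ksubalgebra sc A \<longleftrightarrow>
     0 \<in> A \<and> (\<forall>x\<in>A. \<forall>y\<in>A. x + y \<in> A \<and> x * y \<in> A) \<and> (\<forall>c. \<forall>x\<in>A. sc c x \<in> A)"

lemma poisson_commutant_ksubalgebra:
  assumes "poisson_algebra sc s0"
  shows "ksubalgebra sc (poisson_commutant s0 phi0)"
proof -
  have module: "module sc" and bil: "kbilinear_on sc UNIV s0"
    and pb: "poisson_bracket_on UNIV (+) (*) s0 0"
    using assms unfolding poisson_algebra_def kalg_def by auto
  have add: "s0 (x + y) z = s0 x z + s0 y z" and scale: "s0 (sc c x) y = sc c (s0 x y)" for x y z c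
    using bil unfolding kbilinear_on_def by auto
  have antisym: "s0 x y + s0 y x = 0"
    and leibniz: "s0 x (y * w) = s0 x y * w + y * s0 x w" for x y w
    using pb unfolding poisson_bracket_on_def by auto
  have zero: "s0 0 y = 0" for y
    using add[of 0 0 y] by simp
  have mult: "s0 (x * y) z = 0" if "s0 x z = 0" "s0 y z = 0" for x y z
  proof -
    have "s0 z x = 0" "s0 z y = 0" using antisym[of x z] antisym[of y z] that by simp_all
    then have "s0 z (x * y) = 0" using leibniz by simp
    then show ?thesis using antisym[of "x * y" z] by simp
  qed
  show ?thesis
    unfolding ksubalgebra_def poisson_commutant_def
    using zero add scale mult module.scale_zero_right[OF module] by auto
qed

lemma fsmul_mem_fser:
  assumes "ksubalgebra sc A" "f \<in> fser A" "g \<in> fser A"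
  shows "fsmul f g \<in> fser A"
  using assms unfolding ksubalgebra_def fser_def fsmul_def by (auto intro!: sum_mem[where T=A])

lemma dbr_mem_fser:
  assumes "ksubalgebra sc A" "\<forall>k. \<forall>x\<in>A. \<forall>y\<in>A. p k x y \<in> A" "f \<in> fser A" "g \<in> fser A"
  shows "dbr p f g \<in> fser A"
  using assms unfolding ksubalgebra_def fser_def dbr_def by (auto intro!: sum_mem[where T=A])

lemma dmap_mem_fser:
  assumes "ksubalgebra sc A" "\<forall>k. phi k ` A \<subseteq> A" "f \<in> fser A"
  shows "dmap phi f \<in> fser A"
  using assms unfolding ksubalgebra_def fser_def dmap_def by (auto intro!: sum_mem[where T=A])

lemma dmap_coeff: "dmap P v n = P 0 (v n) + (\<Sum>k\<in>{1..n}. P k (v (n - k)))"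
proof -
  have "{..n} = insert 0 {1..n}" by auto
  then show ?thesis by (simp add: dmap_def)
qed

lemma dmap_cong:
  assumes "\<forall>k. \<forall>x\<in>A. phi k x = chi k x" "g \<in> fser A"
  shows "dmap phi g = dmap chi g"
  using assms by (auto simp: dmap_def fser_def intro!: sum.cong)

lemma dmap_zero:
  assumes "\<forall>k. phi k 0 = 0"
  shows "dmap phi (\<lambda>_. 0) = (\<lambda>_. 0)"
  using assms by (simp add: dmap_def)

lemma dmap_delta:
  assumes "\<forall>k. phi k 0 = 0"
  shows "dmap phi (\<lambda>i. if i = 0 then b else 0) = (\<lambda>n. phi n b)"
proof
  fix n
  have "dmap phi (\<lambda>i. if i = 0 then b else 0) n = (\<Sum>k\<le>n. if k = n then phi n b else 0)"
    unfolding dmap_def using assms by (intro sum.cong refl) auto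
  then show "dmap phi (\<lambda>i. if i = 0 then b else 0) n = phi n b" by simp
qed

lemma dmap_sadd:
  assumes "\<forall>k. klinear_on sc1 sc2 A (phi k)" "f \<in> fser A" "g \<in> fser A"
  shows "dmap phi (sadd f g) = sadd (dmap phi f) (dmap phi g)"
  using assms by (auto simp: klinear_on_def dmap_def sadd_def fser_def sum.distrib[symmetric]
      intro!: sum.cong)

lemma dmap_scale:
  assumes "module sc2" "\<forall>k. klinear_on sc1 sc2 A (phi k)" "f \<in> fser A"
  shows "dmap phi (\<lambda>n. sc1 c (f n)) = (\<lambda>n. sc2 c (dmap phi f n))"
  using assms by (auto simp: klinear_on_def dmap_def fser_def module.scale_sum_right
      intro!: sum.cong)

lemma inj_on_dmap:
  assumes id0: "\<forall>x\<in>A. P 0 x = x"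
  shows "inj_on (dmap P) (fser A)"
proof
  fix u u' assume u: "u \<in> fser A" and u': "u' \<in> fser A" and eq: "dmap P u = dmap P u'"
  show "u = u'"
  proof
    fix n
    show "u n = u' n"
    proof (induction n rule: less_induct)
      case (less n)
      have "(\<Sum>k\<in>{1..n}. P k (u (n - k))) = (\<Sum>k\<in>{1..n}. P k (u' (n - k)))"
        by (intro sum.cong refl) (use less in auto)
      then have "P 0 (u n) = P 0 (u' n)"
        using eq dmap_coeff[of P u n] dmap_coeff[of P u' n] by (metis add_right_cancel)
      then show ?case using id0 u u' by (simp add: fser_def)
    qed
  qed
qed

definition dcomp :: "(nat \<Rightarrow> 'b \<Rightarrow> 'c::comm_ring) \<Rightarrow> (nat \<Rightarrow> 'a \<Rightarrow> 'b) \<Rightarrow> nat \<Rightarrow> 'a \<Rightarrow> 'c" where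
  "dcomp phi chi = (\<lambda>m b. dmap phi (\<lambda>k. chi k b) m)"

lemma dmap_dmap:
  assumes g: "g \<in> fser S" and chi: "\<forall>l. chi l ` S \<subseteq> T"
    and T0: "0 \<in> T" and T_add: "\<forall>x\<in>T. \<forall>y\<in>T. x + y \<in> T"
    and phi_add: "\<forall>j. \<forall>x\<in>T. \<forall>y\<in>T. phi j (x + y) = phi j x + phi j y"
  shows "dmap phi (dmap chi g) = dmap (dcomp phi chi) g"
proof
  fix n
  have "dmap phi (dmap chi g) n = (\<Sum>k\<le>n. phi k (\<Sum>l\<le>n - k. chi l (g (n - k - l))))"
    by (simp add: dmap_def)
  also have "\<dots> = (\<Sum>k\<le>n. \<Sum>l\<le>n - k. phi k (chi l (g (n - k - l))))"
    using g chi T0 T_add phi_add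
    by (intro sum.cong refl additive_on_sum[where T=T]) (auto simp: fser_def)
  also have "\<dots> = (\<Sum>(k, l)\<in>{(k, l). k + l \<le> n}. phi k (chi l (g (n - k - l))))"
    by (simp add: pairs_le_eq_Sigma sum.Sigma)
  also have "\<dots> = (\<Sum>m\<le>n. \<Sum>j\<le>m. phi j (chi (m - j) (g (n - j - (m - j)))))"
    by (rule sum.triangle_reindex_eq)
  also have "\<dots> = (\<Sum>m\<le>n. \<Sum>j\<le>m. phi j (chi (m - j) (g (n - m))))"
    by (intro sum.cong refl) auto
  also have "\<dots> = dmap (dcomp phi chi) g n"
    by (simp add: dmap_def dcomp_def)
  finally show "dmap phi (dmap chi g) n = dmap (dcomp phi chi) g n" .
qed

lemma klinear_on_dcomp:
  assumes "module sc3"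
    and chi: "\<forall>k. klinear_on sc1 sc2 S (chi k) \<and> chi k ` S \<subseteq> T"
    and phi: "\<forall>k. klinear_on sc2 sc3 T (phi k)"
  shows "klinear_on sc1 sc3 S (dcomp phi chi k)"
proof -
  have "chi j x \<in> T" if "x \<in> S" for j x using chi that by blast
  then show ?thesis
    using assms
    by (auto simp: klinear_on_def dcomp_def dmap_def sum.distrib module.scale_sum_right
        intro!: sum.cong)
qed

lemma formal_poisson_deformation_zeroth:
  assumes "formal_poisson_deformation sc UNIV s0 p"
  shows "p 0 = s0"
  using assms by (auto simp: formal_poisson_deformation_def intro!: ext)

lemma formal_poisson_deformation_zero_left:
  assumes "formal_poisson_deformation sc UNIV s0 p"
  shows "p k 0 y = 0"
proof -
  have "p k (0 + 0) y = p k 0 y + p k 0 y"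
    using assms unfolding formal_poisson_deformation_def kbilinear_on_def by blast
  then show ?thesis by simp
qed

lemma formal_poisson_deformation_bracket_eq_zero_swap:
  assumes "formal_poisson_deformation sc UNIV s0 p" "dbr p f g = (\<lambda>_. 0)"
  shows "dbr p g f = (\<lambda>_. 0)"
proof -
  have "sadd (dbr p g f) (dbr p f g) = (\<lambda>_. 0)"
    using assms(1) unfolding formal_poisson_deformation_def poisson_bracket_on_def by simp
  then show ?thesis
    using assms(2) by (simp add: sadd_def)
qed

lemma formal_poisson_deformation_bracket_sadd_left:
  assumes "formal_poisson_deformation sc UNIV s0 p"
  shows "dbr p (sadd f g) h = sadd (dbr p f h) (dbr p g h)"
  using assms unfolding formal_poisson_deformation_def poisson_bracket_on_def by simp

lemma dbr_lowest_coeff: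
  assumes w: "\<forall>i<m. w i = 0" and zero_left: "\<forall>k y. p k 0 y = 0"
  shows "dbr p w X m = p 0 (w m) (X 0)"
proof -
  have "dbr p w X m = (\<Sum>k\<le>m. \<Sum>i\<le>m - k. if k = 0 \<and> i = m then p 0 (w m) (X 0) else 0)"
    unfolding dbr_def
  proof (intro sum.cong refl)
    fix k i assume "k \<in> {..m}" "i \<in> {..m - k}"
    then show "p k (w i) (X (m - k - i)) = (if k = 0 \<and> i = m then p 0 (w m) (X 0) else 0)"
      using w zero_left by (cases "i < m") auto
  qed
  also have "\<dots> = (\<Sum>k\<le>m. if k = 0 then p 0 (w m) (X 0) else 0)"
    by (intro sum.cong refl) auto
  also have "\<dots> = p 0 (w m) (X 0)"
    by simp
  finally show ?thesis .
qed

definition series_commutant :: "(nat \<Rightarrow> 'b \<Rightarrow> 'b \<Rightarrow> 'b::comm_ring) \<Rightarrow> (nat \<Rightarrow> 'b) set \<Rightarrow> (nat \<Rightarrow> 'b) set" where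
  "series_commutant p F = {h. \<forall>X\<in>F. dbr p X h = (\<lambda>_. 0)}"

lemma image_series_commutant:
  assumes Psi: "series_poisson_morphism sc UNIV s1 sc UNIV s2 Psi" and bij: "bij (dmap Psi)"
  shows "dmap Psi ` series_commutant s1 F = series_commutant s2 (dmap Psi ` F)"
proof -
  have br: "dmap Psi (dbr s1 f g) = dbr s2 (dmap Psi f) (dmap Psi g)" for f g
    using Psi by (simp add: series_poisson_morphism_def)
  have "klinear_on sc sc UNIV (Psi k)" for k
    using Psi by (simp add: series_poisson_morphism_def)
  then have "Psi k 0 = 0" for k
    using klinear_on_zero by blast
  then have zero: "dmap Psi (\<lambda>_. 0) = (\<lambda>_. 0)"
    by (simp add: dmap_zero)
  have inj: "inj (dmap Psi)" and surj: "surj (dmap Psi)"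
    using bij bij_is_inj bij_is_surj by blast+
  have bracket_zero: "dbr s2 (dmap Psi X) (dmap Psi h) = (\<lambda>_. 0) \<longleftrightarrow> dbr s1 X h = (\<lambda>_. 0)"
    for X h
  proof -
    have "dbr s2 (dmap Psi X) (dmap Psi h) = (\<lambda>_. 0) \<longleftrightarrow> dmap Psi (dbr s1 X h) = dmap Psi (\<lambda>_. 0)"
      by (simp add: br zero)
    also have "\<dots> \<longleftrightarrow> dbr s1 X h = (\<lambda>_. 0)"
      by (rule inj_eq[OF inj])
    finally show ?thesis .
  qed
  have mem: "dmap Psi h \<in> series_commutant s2 (dmap Psi ` F) \<longleftrightarrow> h \<in> series_commutant s1 F"
    for h
    by (simp add: series_commutant_def bracket_zero)
  show ?thesis
  proof (intro set_eqI iffI)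
    fix k assume "k \<in> dmap Psi ` series_commutant s1 F"
    then show "k \<in> series_commutant s2 (dmap Psi ` F)" using mem by blast
  next
    fix k assume k: "k \<in> series_commutant s2 (dmap Psi ` F)"
    obtain h where "k = dmap Psi h" using surj by (metis surjD)
    then show "k \<in> dmap Psi ` series_commutant s1 F" using k mem by blast
  qed
qed

(* Inverts dmap P order by order; this is a right inverse only when P 0 is the identity on all
   the coefficients it produces. *)
function dmap_inv :: "(nat \<Rightarrow> 'b \<Rightarrow> 'b::comm_ring) \<Rightarrow> (nat \<Rightarrow> 'b) \<Rightarrow> nat \<Rightarrow> 'b" where
  "dmap_inv P h n = h n - (\<Sum>j\<in>{1..n}. P j (dmap_inv P h (n - j)))"
  by pat_completeness auto
termination by (relation "measure (\<lambda>(P, h, n). n)") auto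

declare dmap_inv.simps [simp del]

lemma dmap_dmap_inv:
  assumes "\<forall>x\<in>A. P 0 x = x" "\<forall>n. dmap_inv P h n \<in> A"
  shows "dmap P (dmap_inv P h) = h"
proof
  fix n
  have "P 0 (dmap_inv P h n) = dmap_inv P h n"
    using assms by blast
  then have "dmap P (dmap_inv P h) n = dmap_inv P h n + (\<Sum>k\<in>{1..n}. P k (dmap_inv P h (n - k)))"
    by (simp only: dmap_coeff)
  also have "\<dots> = h n"
    by (subst (1) dmap_inv.simps) simp
  finally show "dmap P (dmap_inv P h) n = h n" .
qed

lemma dmap_truncated_dmap_inv:
  assumes "i \<le> m"
  shows "dmap P (\<lambda>j. if j < m then dmap_inv P h j else 0) i
           = P 0 (if i < m then dmap_inv P h i else 0) + (h i - dmap_inv P h i)"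
proof -
  have "(\<Sum>k\<in>{1..i}. P k (if i - k < m then dmap_inv P h (i - k) else 0))
      = (\<Sum>k\<in>{1..i}. P k (dmap_inv P h (i - k)))"
    using assms by (intro sum.cong refl) auto
  also have "\<dots> = h i - dmap_inv P h i"
    using dmap_inv.simps[of P h i] by simp
  finally show ?thesis
    by (simp add: dmap_coeff)
qed

lemma dmap_inv_coeff_mem_poisson_commutant:
  fixes p :: "nat \<Rightarrow> 'b \<Rightarrow> 'b \<Rightarrow> 'b::comm_ring" and s0 :: "'b \<Rightarrow> 'b \<Rightarrow> 'b"
    and phi0 :: "'a \<Rightarrow> 'b"
  defines "A \<equiv> poisson_commutant s0 phi0"
  assumes p: "formal_poisson_deformation sc UNIV s0 p"
    and P0: "\<forall>x\<in>A. P 0 x = x"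
    and F: "\<forall>a. \<exists>X\<in>F. X 0 = phi0 a"
    and FP: "\<forall>X\<in>F. \<forall>v\<in>fser A. dbr p X (dmap P v) = (\<lambda>_. 0)"
    and h: "h \<in> series_commutant p F"
    and below: "\<forall>i<m. dmap_inv P h i \<in> A"
  shows "dmap_inv P h m \<in> A"
proof -
  define v where "v = (\<lambda>j. if j < m then dmap_inv P h j else 0)"
  define w where "w = (\<lambda>i. h i - dmap P v i)"
  have zero_left: "\<forall>k y. p k 0 y = 0"
    using formal_poisson_deformation_zero_left[OF p] by blast
  have "0 \<in> A"
    using zero_left formal_poisson_deformation_zeroth[OF p]
    by (auto simp: A_def poisson_commutant_def)
  then have v: "v \<in> fser A" and P00: "P 0 0 = 0"
    using below P0 by (auto simp: v_def fser_def)
  have w_below: "\<forall>i<m. w i = 0" and w_m: "w m = dmap_inv P h m"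
    using dmap_truncated_dmap_inv[of _ m P h] below P0 P00 by (auto simp: w_def v_def)
  have "h = sadd w (dmap P v)"
    by (simp add: sadd_def w_def)
  show ?thesis
    unfolding A_def poisson_commutant_def
  proof (intro CollectI allI)
    fix a
    obtain X where "X \<in> F" and X0: "X 0 = phi0 a" using F by blast
    then have "dbr p X h = (\<lambda>_. 0)" "dbr p X (dmap P v) = (\<lambda>_. 0)"
      using h FP v by (auto simp: series_commutant_def)
    then have "dbr p h X = (\<lambda>_. 0)" "dbr p (dmap P v) X = (\<lambda>_. 0)"
      using formal_poisson_deformation_bracket_eq_zero_swap[OF p] by blast+
    moreover have "dbr p h X = sadd (dbr p w X) (dbr p (dmap P v) X)"
      using formal_poisson_deformation_bracket_sadd_left[OF p] \<open>h = sadd w (dmap P v)\<close> by metis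
    ultimately have "dbr p w X m = 0"
      by (simp add: sadd_def fun_eq_iff)
    then show "s0 (dmap_inv P h m) (phi0 a) = 0"
      using dbr_lowest_coeff[of m w p X, OF w_below zero_left]
        formal_poisson_deformation_zeroth[OF p] w_m X0
      by simp
  qed
qed

lemma series_commutant_subset_image_dmap:
  fixes p :: "nat \<Rightarrow> 'b \<Rightarrow> 'b \<Rightarrow> 'b::comm_ring" and s0 :: "'b \<Rightarrow> 'b \<Rightarrow> 'b"
    and phi0 :: "'a \<Rightarrow> 'b"
  defines "A \<equiv> poisson_commutant s0 phi0"
  assumes p: "formal_poisson_deformation sc UNIV s0 p"
    and P0: "\<forall>x\<in>A. P 0 x = x"
    and F: "\<forall>a. \<exists>X\<in>F. X 0 = phi0 a"
    and FP: "\<forall>X\<in>F. \<forall>v\<in>fser A. dbr p X (dmap P v) = (\<lambda>_. 0)"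
  shows "series_commutant p F \<subseteq> dmap P ` fser A"
proof
  fix h assume h: "h \<in> series_commutant p F"
  have "dmap_inv P h m \<in> A" for m
  proof (induction m rule: less_induct)
    case (less m)
    then show ?case
      using dmap_inv_coeff_mem_poisson_commutant[OF p _ F _ h, of P] P0 FP
      unfolding A_def by blast
  qed
  then have "dmap_inv P h \<in> fser A" "dmap P (dmap_inv P h) = h"
    using dmap_dmap_inv[of A P h] P0 by (auto simp: fser_def)
  then show "h \<in> dmap P ` fser A"
    by (metis image_eqI)
qed

lemma image_dmap_eq_series_commutant:
  fixes p :: "nat \<Rightarrow> 'b \<Rightarrow> 'b \<Rightarrow> 'b::comm_ring" and s0 :: "'b \<Rightarrow> 'b \<Rightarrow> 'b"
    and phi0 :: "'a \<Rightarrow> 'b"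
  defines "A \<equiv> poisson_commutant s0 phi0"
  assumes p: "formal_poisson_deformation sc UNIV s0 p"
    and Phi0: "\<forall>a. Phi 0 a = phi0 a"
    and P0: "\<forall>x\<in>A. P 0 x = x"
    and comm: "\<forall>f. \<forall>g\<in>fser A. dbr p (dmap Phi f) (dmap P g) = (\<lambda>_. 0)"
  shows "dmap P ` fser A = series_commutant p (range (dmap Phi))"
proof
  show "dmap P ` fser A \<subseteq> series_commutant p (range (dmap Phi))"
    using comm by (auto simp: series_commutant_def)
  have "dmap Phi (\<lambda>_. a) 0 = phi0 a" for a
    using Phi0 by (simp add: dmap_def)
  then have "\<forall>a. \<exists>X\<in>range (dmap Phi). X 0 = phi0 a"
    by blast
  then show "series_commutant p (range (dmap Phi)) \<subseteq> dmap P ` fser A"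
    using series_commutant_subset_image_dmap[OF p] P0 comm unfolding A_def by blast
qed

lemma exists_dcomp_right_factor:
  assumes A: "ksubalgebra sc A" and module: "module sc"
    and Q: "\<forall>k. klinear_on sc sc A (Q k)" and Q0: "\<forall>x\<in>A. Q 0 x = x"
    and T: "\<forall>k. klinear_on sc sc A (T k)"
    and image: "\<forall>b\<in>A. (\<lambda>k. T k b) \<in> dmap Q ` fser A"
  shows "\<exists>R. (\<forall>k. klinear_on sc sc A (R k) \<and> R k ` A \<subseteq> A) \<and> (\<forall>k. \<forall>b\<in>A. dcomp Q R k b = T k b)"
proof -
  define U where "U b = the_inv_into (fser A) (dmap Q) (\<lambda>k. T k b)" for b
  have inj: "inj_on (dmap Q) (fser A)"
    using inj_on_dmap[of A Q, OF Q0] .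
  have U: "U b \<in> fser A" "dmap Q (U b) = (\<lambda>k. T k b)" if "b \<in> A" for b
  proof -
    have "(\<lambda>k. T k b) \<in> dmap Q ` fser A"
      using image that by blast
    then show "U b \<in> fser A" "dmap Q (U b) = (\<lambda>k. T k b)"
      unfolding U_def by (rule the_inv_into_into[OF inj _ subset_refl], rule f_the_inv_into_f[OF inj])
  qed
  have A_add: "x \<in> A \<Longrightarrow> y \<in> A \<Longrightarrow> x + y \<in> A"
    and A_scale: "x \<in> A \<Longrightarrow> sc c x \<in> A" for x y c
    using A by (auto simp: ksubalgebra_def)
  have U_add: "U (x + y) = sadd (U x) (U y)" if "x \<in> A" "y \<in> A" for x y
  proof (rule inj_onD[OF inj])
    have x: "U x \<in> fser A" and y: "U y \<in> fser A"
      using U(1) that by blast+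
    have "dmap Q (sadd (U x) (U y)) = sadd (dmap Q (U x)) (dmap Q (U y))"
      using dmap_sadd[OF Q x y] .
    also have "\<dots> = (\<lambda>k. T k (x + y))"
      using U(2) that T by (simp add: sadd_def klinear_on_def)
    also have "\<dots> = dmap Q (U (x + y))"
      using U(2) A_add that by simp
    finally show "dmap Q (U (x + y)) = dmap Q (sadd (U x) (U y))" by simp
    show "U (x + y) \<in> fser A" using U(1) A_add that by blast
    show "sadd (U x) (U y) \<in> fser A" using x y A_add by (simp add: fser_def sadd_def)
  qed
  have U_scale: "U (sc c x) = (\<lambda>n. sc c (U x n))" if "x \<in> A" for c x
  proof (rule inj_onD[OF inj])
    have x: "U x \<in> fser A"
      using U(1) that by blast
    have "dmap Q (\<lambda>n. sc c (U x n)) = (\<lambda>n. sc c (dmap Q (U x) n))"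
      using dmap_scale[OF module Q x] .
    also have "\<dots> = (\<lambda>k. T k (sc c x))"
      using U(2) that T by (simp add: klinear_on_def)
    also have "\<dots> = dmap Q (U (sc c x))"
      using U(2) A_scale that by simp
    finally show "dmap Q (U (sc c x)) = dmap Q (\<lambda>n. sc c (U x n))" by simp
    show "U (sc c x) \<in> fser A" using U(1) A_scale that by blast
    show "(\<lambda>n. sc c (U x n)) \<in> fser A" using x A_scale by (simp add: fser_def)
  qed
  have "klinear_on sc sc A (\<lambda>b. U b k) \<and> (\<lambda>b. U b k) ` A \<subseteq> A" for k
    using U_add U_scale U(1) by (auto simp: klinear_on_def sadd_def fser_def)
  moreover have "dcomp Q (\<lambda>k b. U b k) k b = T k b" if "b \<in> A" for k b
    using U(2)[OF that] by (simp add: dcomp_def)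
  ultimately show ?thesis
    by (intro exI[of _ "\<lambda>k b. U b k"]) blast
qed

lemma series_poisson_morphism_cancel:
  assumes A: "ksubalgebra sc A"
    and p1A: "\<forall>k. \<forall>x\<in>A. \<forall>y\<in>A. p1 k x y \<in> A" and p2A: "\<forall>k. \<forall>x\<in>A. \<forall>y\<in>A. p2 k x y \<in> A"
    and R: "\<forall>k. klinear_on sc sc A (R k) \<and> R k ` A \<subseteq> A"
    and Q: "series_poisson_morphism sc A p2 sc UNIV s2 Q" and Q0: "\<forall>x\<in>A. Q 0 x = x"
    and S: "series_poisson_morphism sc UNIV s1 sc UNIV s2 S"
    and T: "series_poisson_morphism sc A p1 sc UNIV s1 T"
    and eq: "\<forall>g\<in>fser A. dmap Q (dmap R g) = dmap S (dmap T g)"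
  shows "series_poisson_morphism sc A p1 sc A p2 R"
  unfolding series_poisson_morphism_def
proof (intro conjI ballI)
  show "\<forall>k. klinear_on sc sc A (R k) \<and> R k ` A \<subseteq> A"
    using R .
  have inj: "inj_on (dmap Q) (fser A)"
    using inj_on_dmap[of A Q, OF Q0] .
  have R_mem: "dmap R g \<in> fser A" if "g \<in> fser A" for g
    using dmap_mem_fser[OF A _ that] R by blast
  fix f g assume f: "f \<in> fser A" and g: "g \<in> fser A"
  show "dmap R (fsmul f g) = fsmul (dmap R f) (dmap R g)"
  proof (rule inj_onD[OF inj])
    have "dmap Q (dmap R (fsmul f g)) = fsmul (dmap S (dmap T f)) (dmap S (dmap T g))"
      using eq fsmul_mem_fser[OF A f g] f g S T by (simp add: series_poisson_morphism_def)
    also have "\<dots> = dmap Q (fsmul (dmap R f) (dmap R g))"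
      using eq f g R_mem Q by (simp add: series_poisson_morphism_def)
    finally show "dmap Q (dmap R (fsmul f g)) = dmap Q (fsmul (dmap R f) (dmap R g))" .
    show "dmap R (fsmul f g) \<in> fser A"
      by (rule R_mem[OF fsmul_mem_fser[OF A f g]])
    show "fsmul (dmap R f) (dmap R g) \<in> fser A"
      by (rule fsmul_mem_fser[OF A R_mem[OF f] R_mem[OF g]])
  qed
  show "dmap R (dbr p1 f g) = dbr p2 (dmap R f) (dmap R g)"
  proof (rule inj_onD[OF inj])
    have "dmap Q (dmap R (dbr p1 f g)) = dbr s2 (dmap S (dmap T f)) (dmap S (dmap T g))"
      using eq dbr_mem_fser[OF A p1A f g] f g S T by (simp add: series_poisson_morphism_def)
    also have "\<dots> = dmap Q (dbr p2 (dmap R f) (dmap R g))"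
      using eq f g R_mem Q by (simp add: series_poisson_morphism_def)
    finally show "dmap Q (dmap R (dbr p1 f g)) = dmap Q (dbr p2 (dmap R f) (dmap R g))" .
    show "dmap R (dbr p1 f g) \<in> fser A"
      by (rule R_mem[OF dbr_mem_fser[OF A p1A f g]])
    show "dbr p2 (dmap R f) (dmap R g) \<in> fser A"
      by (rule dbr_mem_fser[OF A p2A R_mem[OF f] R_mem[OF g]])
  qed
qed

lemma bij_betw_dmap_cancel:
  assumes R: "\<forall>g\<in>fser A. dmap R g \<in> fser A"
    and Q0: "\<forall>x\<in>A. Q 0 x = x" and T0: "\<forall>x\<in>A. T 0 x = x" and S: "inj (dmap S)"
    and eq: "\<forall>g\<in>fser A. dmap Q (dmap R g) = dmap S (dmap T g)"
    and image: "dmap S ` dmap T ` fser A = dmap Q ` fser A"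
  shows "bij_betw (dmap R) (fser A) (fser A)"
proof -
  have injQ: "inj_on (dmap Q) (fser A)" and injT: "inj_on (dmap T) (fser A)"
    using inj_on_dmap[of A Q, OF Q0] inj_on_dmap[of A T, OF T0] .
  have "inj_on (dmap R) (fser A)"
  proof
    fix u v assume "u \<in> fser A" "v \<in> fser A" "dmap R u = dmap R v"
    then show "u = v"
      using eq S injT by (metis injD inj_onD)
  qed
  moreover have "fser A \<subseteq> dmap R ` fser A"
  proof
    fix g assume g: "g \<in> fser A"
    then obtain f where f: "f \<in> fser A" and "dmap S (dmap T f) = dmap Q g"
      using image by (metis imageE image_eqI)
    then have "dmap Q (dmap R f) = dmap Q g"
      using eq by simp
    then have "dmap R f = g"
      using inj_onD[OF injQ] R f g by blast
    then show "g \<in> dmap R ` fser A"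
      using f by blast
  qed
  ultimately show ?thesis
    using R by (auto simp: bij_betw_def)
qed

lemma exists_dmap_intertwiner:
  assumes A: "ksubalgebra sc A" and module: "module sc"
    and P1: "\<forall>k. klinear_on sc sc A (P1 k)"
    and P2: "\<forall>k. klinear_on sc sc A (P2 k)" and P2_0: "\<forall>x\<in>A. P2 0 x = x"
    and Psi: "\<forall>k. klinear_on sc sc UNIV (Psi k)"
    and image: "dmap Psi ` dmap P1 ` fser A \<subseteq> dmap P2 ` fser A"
  shows "\<exists>R. (\<forall>k. klinear_on sc sc A (R k) \<and> R k ` A \<subseteq> A) \<and>
           (\<forall>g\<in>fser A. dmap P2 (dmap R g) = dmap Psi (dmap P1 g))"
proof -
  have "0 \<in> A"
    using A by (simp add: ksubalgebra_def)
  then have "P1 k 0 = 0" "Psi k 0 = 0" for k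
    using P1 Psi klinear_on_zero by blast+
  then have "(\<lambda>k. dcomp Psi P1 k b) = dmap Psi (dmap P1 (\<lambda>i. if i = 0 then b else 0))" for b
    by (simp add: dcomp_def dmap_delta)
  moreover have "(\<lambda>i. if i = 0 then b else 0) \<in> fser A" if "b \<in> A" for b
    using that \<open>0 \<in> A\<close> by (simp add: fser_def)
  ultimately have "\<forall>b\<in>A. (\<lambda>k. dcomp Psi P1 k b) \<in> dmap P2 ` fser A"
    using image by blast
  moreover have "\<forall>k. klinear_on sc sc A (dcomp Psi P1 k)"
    using klinear_on_dcomp[OF module _ Psi, of sc A P1] P1 by simp
  ultimately obtain R where R: "\<forall>k. klinear_on sc sc A (R k) \<and> R k ` A \<subseteq> A"
    and factor: "\<forall>k. \<forall>b\<in>A. dcomp P2 R k b = dcomp Psi P1 k b"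
    using exists_dcomp_right_factor[OF A module P2 P2_0] by blast
  have "dmap P2 (dmap R g) = dmap Psi (dmap P1 g)" if g: "g \<in> fser A" for g
  proof -
    have "dmap P2 (dmap R g) = dmap (dcomp P2 R) g"
      using A R P2 by (intro dmap_dmap[OF g, where T=A]) (auto simp: ksubalgebra_def klinear_on_def)
    also have "\<dots> = dmap (dcomp Psi P1) g"
      using dmap_cong[OF factor g] .
    also have "\<dots> = dmap Psi (dmap P1 g)"
      using dmap_dmap[OF g, of P1 UNIV Psi] Psi by (simp add: klinear_on_def)
    finally show ?thesis .
  qed
  then show ?thesis
    using R by blast
qed

lemma exists_series_poisson_iso_factor:
  assumes A: "ksubalgebra sc A" and module: "module sc"
    and p1A: "\<forall>k. \<forall>x\<in>A. \<forall>y\<in>A. p1 k x y \<in> A" and p2A: "\<forall>k. \<forall>x\<in>A. \<forall>y\<in>A. p2 k x y \<in> A"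
    and P1: "series_poisson_morphism sc A p1 sc UNIV s1 P1" and P1_0: "\<forall>x\<in>A. P1 0 x = x"
    and P2: "series_poisson_morphism sc A p2 sc UNIV s2 P2" and P2_0: "\<forall>x\<in>A. P2 0 x = x"
    and Psi: "series_poisson_morphism sc UNIV s1 sc UNIV s2 Psi" and Psi_inj: "inj (dmap Psi)"
    and image: "dmap Psi ` dmap P1 ` fser A = dmap P2 ` fser A"
  shows "\<exists>psi'. series_poisson_morphism sc A p1 sc A p2 psi' \<and>
           bij_betw (dmap psi') (fser A) (fser A) \<and>
           (\<forall>g\<in>fser A. dmap P2 (dmap psi' g) = dmap Psi (dmap P1 g))"
proof -
  have P1_lin: "\<forall>k. klinear_on sc sc A (P1 k)" and P2_lin: "\<forall>k. klinear_on sc sc A (P2 k)"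
    and Psi_lin: "\<forall>k. klinear_on sc sc UNIV (Psi k)"
    using P1 P2 Psi by (simp_all add: series_poisson_morphism_def)
  obtain R where R: "\<forall>k. klinear_on sc sc A (R k) \<and> R k ` A \<subseteq> A"
    and intertwine: "\<forall>g\<in>fser A. dmap P2 (dmap R g) = dmap Psi (dmap P1 g)"
    using exists_dmap_intertwiner[OF A module P1_lin P2_lin P2_0 Psi_lin equalityD1[OF image]]
    by blast
  have "series_poisson_morphism sc A p1 sc A p2 R"
    using series_poisson_morphism_cancel[OF A p1A p2A R P2 P2_0 Psi P1 intertwine] .
  moreover have "bij_betw (dmap R) (fser A) (fser A)"
    using bij_betw_dmap_cancel[OF _ P2_0 P1_0 Psi_inj intertwine image] dmap_mem_fser[OF A] R
    by blast
  ultimately show ?thesis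
    using intertwine by blast
qed

theorem proposition3p13:
  fixes scA :: "'k::field_char_0 \<Rightarrow> 'a::comm_ring \<Rightarrow> 'a"
    and scB :: "'k \<Rightarrow> 'b::comm_ring \<Rightarrow> 'b"
    and pi0 :: "'a \<Rightarrow> 'a \<Rightarrow> 'a" and sigma0 :: "'b \<Rightarrow> 'b \<Rightarrow> 'b"
    and phi0 :: "'a \<Rightarrow> 'b"
    and pi1 pi2 :: "nat \<Rightarrow> 'a \<Rightarrow> 'a \<Rightarrow> 'a"
    and sigma1 sigma2 :: "nat \<Rightarrow> 'b \<Rightarrow> 'b \<Rightarrow> 'b"
    and pi'1 pi'2 :: "nat \<Rightarrow> 'b \<Rightarrow> 'b \<Rightarrow> 'b"
    and Phi1 Phi2 :: "nat \<Rightarrow> 'a \<Rightarrow> 'b"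
    and Phi'1 Phi'2 :: "nat \<Rightarrow> 'b \<Rightarrow> 'b"
    and psi :: "nat \<Rightarrow> 'a \<Rightarrow> 'a"
    and Psi :: "nat \<Rightarrow> 'b \<Rightarrow> 'b"
  defines "A' \<equiv> poisson_commutant sigma0 phi0"
  assumes A: "poisson_algebra scA pi0"
    and B: "poisson_algebra scB sigma0"
    and phi0: "poisson_morphism scA pi0 scB sigma0 phi0"
    and def_pi1: "formal_poisson_deformation scA UNIV pi0 pi1"
    and def_pi2: "formal_poisson_deformation scA UNIV pi0 pi2"
    and def_sigma1: "formal_poisson_deformation scB UNIV sigma0 sigma1"
    and def_sigma2: "formal_poisson_deformation scB UNIV sigma0 sigma2"
    and def_pi'1: "formal_poisson_deformation scB A' sigma0 pi'1"
    and def_pi'2: "formal_poisson_deformation scB A' sigma0 pi'2"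
    and Phi1: "series_poisson_morphism scA UNIV pi1 scB UNIV sigma1 Phi1"
    and Phi2: "series_poisson_morphism scA UNIV pi2 scB UNIV sigma2 Phi2"
    and Phi1_0: "\<forall>a. Phi1 0 a = phi0 a"
    and Phi2_0: "\<forall>a. Phi2 0 a = phi0 a"
    and Phi'1: "series_poisson_morphism scB A' pi'1 scB UNIV sigma1 Phi'1"
    and Phi'2: "series_poisson_morphism scB A' pi'2 scB UNIV sigma2 Phi'2"
    and Phi'1_0: "\<forall>b\<in>A'. Phi'1 0 b = b"
    and Phi'2_0: "\<forall>b\<in>A'. Phi'2 0 b = b"
    and comm1: "\<forall>f\<in>fser UNIV. \<forall>g\<in>fser A'. dbr sigma1 (dmap Phi1 f) (dmap Phi'1 g) = (\<lambda>_. 0)"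
    and comm2: "\<forall>f\<in>fser UNIV. \<forall>g\<in>fser A'. dbr sigma2 (dmap Phi2 f) (dmap Phi'2 g) = (\<lambda>_. 0)"
    and psi: "series_poisson_morphism scA UNIV pi1 scA UNIV pi2 psi"
    and psi_bij: "bij_betw (dmap psi) (fser UNIV) (fser UNIV)"
    and Psi: "series_poisson_morphism scB UNIV sigma1 scB UNIV sigma2 Psi"
    and Psi_bij: "bij_betw (dmap Psi) (fser UNIV) (fser UNIV)"
    and intertwine: "\<forall>f\<in>fser UNIV. dmap Phi2 (dmap psi f) = dmap Psi (dmap Phi1 f)"
  shows "\<exists>psi' :: nat \<Rightarrow> 'b \<Rightarrow> 'b.
           series_poisson_morphism scB A' pi'1 scB A' pi'2 psi' \<and>
           bij_betw (dmap psi') (fser A') (fser A') \<and>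
           (\<forall>g\<in>fser A'. dmap Phi'2 (dmap psi' g) = dmap Psi (dmap Phi'1 g))"
proof -
  have A': "ksubalgebra scB A'"
    unfolding A'_def using poisson_commutant_ksubalgebra[OF B] .
  have module: "module scB"
    using B by (simp add: poisson_algebra_def kalg_def)
  have image1: "dmap Phi'1 ` fser A' = series_commutant sigma1 (range (dmap Phi1))"
    unfolding A'_def
    by (rule image_dmap_eq_series_commutant[where Phi=Phi1])
      (use def_sigma1 Phi1_0 Phi'1_0 comm1 in \<open>simp_all add: A'_def\<close>)
  have image2: "dmap Phi'2 ` fser A' = series_commutant sigma2 (range (dmap Phi2))"
    unfolding A'_def
    by (rule image_dmap_eq_series_commutant[where Phi=Phi2])
      (use def_sigma2 Phi2_0 Phi'2_0 comm2 in \<open>simp_all add: A'_def\<close>)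
  have "range (dmap Phi2) = dmap Phi2 ` range (dmap psi)"
    using psi_bij by (simp add: bij_betw_def)
  also have "\<dots> = dmap Psi ` range (dmap Phi1)"
    using intertwine by (simp add: image_image)
  finally have "dmap Psi ` dmap Phi'1 ` fser A' = dmap Phi'2 ` fser A'"
    using image1 image2 image_series_commutant[OF Psi] Psi_bij by simp
  moreover have "\<forall>k. \<forall>x\<in>A'. \<forall>y\<in>A'. pi'1 k x y \<in> A'" "\<forall>k. \<forall>x\<in>A'. \<forall>y\<in>A'. pi'2 k x y \<in> A'"
    using def_pi'1 def_pi'2 by (simp_all add: formal_poisson_deformation_def)
  ultimately show ?thesis
    using exists_series_poisson_iso_factor[OF A' module _ _ Phi'1 Phi'1_0 Phi'2 Phi'2_0 Psi]
      Psi_bij by (simp add: bij_betw_def)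
qed

end
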